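(* Let $\Sigma$ be a rotational $V$-translator in $\mathrm{SL}(2,\mathbb R)$, $V=x\partial_x+y\partial_y$, whose generating curve $\alpha(s)=(x(s),y(s))$ satisfies $x'=2y\cos\varphi$, $y'=2y\sin\varphi$. (1) If $\varphi$ is constant, then $\varphi\equiv\pi/2$ and $\Sigma$ is the rotational surface with generating curve $\alpha(s)=(0,ce^{2s})$, $c>0$ (the straight line $x=0$). (2) If $\Sigma$ has constant mean curvature $H$, then $H=0$ and $\Sigma$ is the surface of item (1).
   Context: $\mathrm{SL}(2,\mathbb R)$ is given global coordinates $(x,y,\theta)\in\mathbb R\times(0,\infty)\times\mathbb R$ via $(x,y,\theta)\mapsto \begin{pmatrix}1&x\\0&1\end{pmatrix}\begin{pmatrix}\sqrt y&0\\0&1/\sqrt y\end{pmatrix}\begin{pmatrix}\cos\theta&\sin\theta\\-\sin\theta&\cos\theta\end{pmatrix}$, with the metric $\langle\,,\rangle=\frac{dx^2+dy^2}{4y^2}+\left(d\theta+\frac{dx}{2y}\right)^2$. Orthonormal frame: $e_1=2y\partial_x-\partial_\theta$, $e_2=2y\partial_y$, $e_3=\partial_\theta$; $V=\frac{1}{2y}(xe_1+ye_2+xe_3)$. A surface with unit normal $N$ and mean curvature $H$ (average of principal curvatures w.r.t. $N$) is a $V$-translator if $H=\langle N,V\rangle$. Rotational surfaces are those parametrized as $(s,t)\mapsto(x(s),y(s),t)$; when $x'=2y\cos\varphi$, $y'=2y\sin\varphi$, one has $N=-\sin\varphi\,e_1+\cos\varphi\,e_2$ and $H=\frac{\varphi'}{2}+\cos\varphi$.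 *)

theory Defs
  imports "HOL-Analysis.Analysis"
begin

text \<open>Components with respect to the orthonormal frame e1, e2, e3 of SL(2,R).\<close>

definition frame_inner :: "real \<times> real \<times> real \<Rightarrow> real \<times> real \<times> real \<Rightarrow> real" where
  "frame_inner a b = fst a * fst b + fst (snd a) * fst (snd b) + snd (snd a) * snd (snd b)"

definition V_frame :: "real \<Rightarrow> real \<Rightarrow> real \<times> real \<times> real" where
  "V_frame x y = (x / (2*y), y / (2*y), x / (2*y))"

definition N_rot :: "real \<Rightarrow> real \<times> real \<times> real" where
  "N_rot phi = (- sin phi, cos phi, 0)"

definition H_rot :: "real \<Rightarrow> real \<Rightarrow> real" where
  "H_rot phi phi' = phi' / 2 + cos phi"

definition rot_generating_curve ::
  "real set \<Rightarrow> (real \<Rightarrow> real) \<Rightarrow> (real \<Rightarrow> real) \<Rightarrow> (real \<Rightarrow> real) \<Rightarrow> (real \<Rightarrow> real) \<Rightarrow> bool" where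
  "rot_generating_curve I x y phi phi' \<longleftrightarrow>
     open I \<and> is_interval I \<and> I \<noteq> {} \<and>
     (\<forall>s\<in>I. y s > 0 \<and>
        (x has_real_derivative 2 * y s * cos (phi s)) (at s) \<and>
        (y has_real_derivative 2 * y s * sin (phi s)) (at s) \<and>
        (phi has_real_derivative phi' s) (at s))"

definition V_translator_rot ::
  "real set \<Rightarrow> (real \<Rightarrow> real) \<Rightarrow> (real \<Rightarrow> real) \<Rightarrow> (real \<Rightarrow> real) \<Rightarrow> (real \<Rightarrow> real) \<Rightarrow> bool" where
  "V_translator_rot I x y phi phi' \<longleftrightarrow>
     (\<forall>s\<in>I. H_rot (phi s) (phi' s) = frame_inner (N_rot (phi s)) (V_frame (x s) (y s)))"

text \<open>The surface of item (1): generating curve (0, c e^{2s}), c>0, phi = pi/2 (mod 2 pi);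
  or the same curve with reversed parameter (phi = -pi/2 mod 2 pi, y = c e^{-2s}).\<close>
definition is_item1_surface ::
  "real set \<Rightarrow> (real \<Rightarrow> real) \<Rightarrow> (real \<Rightarrow> real) \<Rightarrow> (real \<Rightarrow> real) \<Rightarrow> bool" where
  "is_item1_surface I x y phi =
     (((\<exists>k::int. \<forall>s\<in>I. phi s = pi/2 + 2 * of_int k * pi) \<and>
        (\<exists>c>0. \<forall>s\<in>I. x s = 0 \<and> y s = c * exp (2 * s)))
    \<or> ((\<exists>k::int. \<forall>s\<in>I. phi s = - pi/2 + 2 * of_int k * pi) \<and>
        (\<exists>c>0. \<forall>s\<in>I. x s = 0 \<and> y s = c * exp (- 2 * s))))"

end

theory Submission
  imports Defs
begin

text \<open>
  Write \<open>u = x/y\<close>. The translator equation reads \<open>2H = cos \<phi> - u sin \<phi>\<close>, and the equations of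
  the generating curve give \<open>u' = 2(cos \<phi> - u sin \<phi>)\<close>, so \<open>u' = 4H\<close>.
  If \<open>\<phi>\<close> is constant, then \<open>\<phi>' = 0\<close> forces \<open>u sin \<phi> = -cos \<phi>\<close> with \<open>sin \<phi> \<noteq> 0\<close>; hence \<open>u\<close> is
  constant, \<open>H = 0\<close>, \<open>cos \<phi> = 0\<close> and \<open>u = 0\<close>, and \<open>y' = \<plusminus>2y\<close> integrates to \<open>y = c exp (\<plusminus>2s)\<close>.
  If \<open>H\<close> is constant, differentiating \<open>2H = cos \<phi> - u sin \<phi>\<close> and eliminating \<open>\<phi>\<close> yields the
  polynomial relation \<open>(1 - H\<^sup>2) u\<^sup>2 + (4H\<^sup>2 - 1) H\<^sup>2 = 0\<close>. Its derivative \<open>8 (1 - H\<^sup>2) H u = 0\<close>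
  is incompatible with \<open>u' = 4H \<noteq> 0\<close>, so \<open>H = 0\<close>; then \<open>u = 0\<close>, \<open>cos \<phi> = 0\<close>, \<open>\<phi>' = 0\<close>, and we are
  back in the constant-angle case.
\<close>

lemma DERIV_eq_0_if_constant_on_open:
  fixes f :: "real \<Rightarrow> real"
  assumes "open I" "s \<in> I" "\<forall>t\<in>I. f t = C" "(f has_real_derivative D) (at s)"
  shows "D = 0"
proof -
  have "((\<lambda>_. C) has_real_derivative 0) (at s)" by simp
  then have "(f has_real_derivative 0) (at s)"
    by (rule has_field_derivative_transform_within_open[where S=I]) (use assms in auto)
  then show ?thesis using assms(4) DERIV_unique by blast
qed

lemma DERIV_eq_scaled_imp_exp:
  fixes f :: "real \<Rightarrow> real"
  assumes "is_interval I" "\<forall>s\<in>I. (f has_real_derivative k * f s) (at s)"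
  shows "\<exists>c. \<forall>s\<in>I. f s = c * exp (k * s)"
proof -
  have "((\<lambda>s. f s * exp (- k * s)) has_real_derivative 0) (at s within I)" if "s \<in> I" for s
  proof -
    have "((\<lambda>s. f s * exp (- k * s)) has_real_derivative
        k * f s * exp (- k * s) + f s * (exp (- k * s) * (- k))) (at s)"
      using assms(2) that by (auto intro!: derivative_eq_intros)
    then show ?thesis by (simp add: has_field_derivative_at_within)
  qed
  then obtain c where c: "\<forall>s\<in>I. f s * exp (- k * s) = c"
    using has_field_derivative_zero_constant[OF is_interval_convex[OF assms(1)]] by blast
  have "f s = c * exp (k * s)" if "s \<in> I" for s
  proof -
    have "f s = f s * exp (- k * s) * exp (k * s)" by (simp add: mult.assoc flip: exp_add)
    also have "\<dots> = c * exp (k * s)" using c that by simp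
    finally show ?thesis .
  qed
  then show ?thesis by blast
qed

lemma rot_generating_curveD:
  assumes "rot_generating_curve I x y phi phi'"
  shows "open I" "is_interval I" "I \<noteq> {}"
    and "s \<in> I \<Longrightarrow> y s > 0"
    and "s \<in> I \<Longrightarrow> (x has_real_derivative 2 * y s * cos (phi s)) (at s)"
    and "s \<in> I \<Longrightarrow> (y has_real_derivative 2 * y s * sin (phi s)) (at s)"
    and "s \<in> I \<Longrightarrow> (phi has_real_derivative phi' s) (at s)"
  using assms unfolding rot_generating_curve_def by auto

text \<open>Here \<open>c, z, f\<close> stand for \<open>cos \<phi>, sin \<phi>, \<phi>'\<close>; the last hypothesis is the derivative of
  \<open>c - u z = 2H\<close> when \<open>u' = 4H\<close>.\<close>
lemma slope_quadratic_of_constant_H: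
  fixes c z u f H :: real
  assumes circle: "c\<^sup>2 + z\<^sup>2 = 1" and H: "c = 2 * H + u * z" and f: "f = - u * z - c"
    and derivative: "z * f + 4 * H * z + u * c * f = 0"
  shows "(1 - H\<^sup>2) * u\<^sup>2 + (4 * H\<^sup>2 - 1) * H\<^sup>2 = 0"
proof -
  have circle': "z\<^sup>2 * (1 + u\<^sup>2) + 4 * H * u * z + 4 * H\<^sup>2 - 1 = 0"
    using circle unfolding H by (simp add: algebra_simps power2_eq_square)
  have derivative': "(2 * H + 2 * u * z) * (z * (1 + u\<^sup>2) + 2 * H * u) - 4 * H * z = 0"
    using derivative unfolding f H by (simp add: algebra_simps power2_eq_square)
  have "2 * (u * (1 - 2 * H\<^sup>2) - H * z * (1 + u\<^sup>2))
      = (2 * H + 2 * u * z) * (z * (1 + u\<^sup>2) + 2 * H * u) - 4 * H * z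
        - 2 * u * (z\<^sup>2 * (1 + u\<^sup>2) + 4 * H * u * z + 4 * H\<^sup>2 - 1)"
    by (simp add: algebra_simps power2_eq_square)
  then have linear: "u * (1 - 2 * H\<^sup>2) = H * z * (1 + u\<^sup>2)"
    using derivative' circle' by simp
  have "H\<^sup>2 * (1 + u\<^sup>2) * (z\<^sup>2 * (1 + u\<^sup>2) + 4 * H * u * z + 4 * H\<^sup>2 - 1)
      = (H * z * (1 + u\<^sup>2))\<^sup>2 + 4 * H\<^sup>2 * u * (H * z * (1 + u\<^sup>2)) + H\<^sup>2 * (1 + u\<^sup>2) * (4 * H\<^sup>2 - 1)"
    by (simp add: algebra_simps power2_eq_square)
  also have "\<dots> = (u * (1 - 2 * H\<^sup>2))\<^sup>2 + 4 * H\<^sup>2 * u * (u * (1 - 2 * H\<^sup>2)) + H\<^sup>2 * (1 + u\<^sup>2) * (4 * H\<^sup>2 - 1)"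
    by (simp only: linear)
  also have "\<dots> = (1 - H\<^sup>2) * u\<^sup>2 + (4 * H\<^sup>2 - 1) * H\<^sup>2"
    by (simp add: algebra_simps power2_eq_square power4_eq_xxxx)
  finally show ?thesis using circle' by simp
qed

context
  fixes I :: "real set" and x y phi phi' :: "real \<Rightarrow> real"
  assumes curve: "rot_generating_curve I x y phi phi'"
    and translator: "V_translator_rot I x y phi phi'"
begin

lemma rot_translator_H_eq:
  assumes "s \<in> I"
  shows "H_rot (phi s) (phi' s) = (cos (phi s) - x s / y s * sin (phi s)) / 2"
proof -
  have "y s > 0" using rot_generating_curveD(4)[OF curve assms] .
  moreover have "H_rot (phi s) (phi' s) = frame_inner (N_rot (phi s)) (V_frame (x s) (y s))"
    using translator assms unfolding V_translator_rot_def by blast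
  ultimately show ?thesis
    unfolding frame_inner_def N_rot_def V_frame_def by (simp add: field_simps)
qed

lemma rot_translator_angle_derivative:
  assumes "s \<in> I"
  shows "phi' s = - x s / y s * sin (phi s) - cos (phi s)"
  using rot_translator_H_eq[OF assms] unfolding H_rot_def by (simp add: field_simps)

lemma rot_translator_slope_derivative:
  assumes "s \<in> I"
  shows "((\<lambda>s. x s / y s) has_real_derivative 4 * H_rot (phi s) (phi' s)) (at s)"
proof -
  have y: "y s > 0" using rot_generating_curveD(4)[OF curve assms] .
  have "((\<lambda>s. x s / y s) has_real_derivative
      (2 * y s * cos (phi s) * y s - x s * (2 * y s * sin (phi s))) / (y s * y s)) (at s)"
    using rot_generating_curveD(5,6)[OF curve assms] y by (auto intro!: derivative_eq_intros)
  moreover have "(2 * y s * cos (phi s) * y s - x s * (2 * y s * sin (phi s))) / (y s * y s)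
      = 4 * H_rot (phi s) (phi' s)"
    unfolding rot_translator_H_eq[OF assms] using y by (simp add: field_simps)
  ultimately show ?thesis by simp
qed

lemma item1_surface_if_constant_angle:
  assumes const: "\<forall>s\<in>I. \<forall>t\<in>I. phi s = phi t"
  shows "is_item1_surface I x y phi"
proof -
  note open_I = rot_generating_curveD(1)[OF curve]
    and interval_I = rot_generating_curveD(2)[OF curve]
    and y_pos = rot_generating_curveD(4)[OF curve]
    and y_deriv = rot_generating_curveD(6)[OF curve]
  obtain s0 where s0: "s0 \<in> I" using rot_generating_curveD(3)[OF curve] by blast
  define p where "p = phi s0"
  have phi_p: "phi s = p" if "s \<in> I" for s
    using const s0 that unfolding p_def by blast
  have phi'_0: "phi' s = 0" if "s \<in> I" for s
    using DERIV_eq_0_if_constant_on_open[OF open_I that _ rot_generating_curveD(7)[OF curve that]]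
      phi_p by blast
  have slope_sin: "x s / y s * sin p = - cos p" if "s \<in> I" for s
    using rot_translator_angle_derivative[OF that] phi'_0[OF that] phi_p[OF that] by simp
  have sin_p: "sin p \<noteq> 0"
  proof
    assume "sin p = 0"
    then have "cos p = 0" using slope_sin[OF s0] by simp
    with \<open>sin p = 0\<close> show False using sin_cos_squared_add[of p] by simp
  qed
  have slope_const: "\<forall>s\<in>I. x s / y s = - cos p / sin p"
    using slope_sin sin_p by (simp add: field_simps)
  have "4 * H_rot (phi s0) (phi' s0) = 0"
    by (rule DERIV_eq_0_if_constant_on_open[OF open_I s0 slope_const])
      (rule rot_translator_slope_derivative[OF s0])
  then have cos_p: "cos p = 0" using phi_p[OF s0] phi'_0[OF s0] unfolding H_rot_def by simp
  have x_0: "x s = 0" if "s \<in> I" for s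
    using slope_sin[OF that] cos_p sin_p y_pos[OF that] by simp
  have sin_p_cases: "sin p = 1 \<or> sin p = -1"
    using cos_p sin_cos_squared_add[of p] by (simp add: power2_eq_1_iff)
  have "(y has_real_derivative (2 * sin p) * y s) (at s)" if "s \<in> I" for s
    using y_deriv[OF that] phi_p[OF that] by (simp add: ac_simps)
  then obtain c where c: "\<forall>s\<in>I. y s = c * exp (2 * sin p * s)"
    using DERIV_eq_scaled_imp_exp[OF interval_I, of y "2 * sin p"] by blast
  have "c > 0"
    using c y_pos[OF s0] s0 by (metis exp_gt_zero zero_less_mult_pos2)
  from sin_p_cases show ?thesis
  proof
    assume "sin p = 1"
    then obtain n :: int where "p = (2 * of_int n + 1 / 2) * pi" using sin_eq_1 by blast
    then have "\<forall>s\<in>I. phi s = pi / 2 + 2 * of_int n * pi"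
      using phi_p by (simp add: algebra_simps)
    moreover have "\<forall>s\<in>I. y s = c * exp (2 * s)" using c \<open>sin p = 1\<close> by simp
    ultimately show ?thesis unfolding is_item1_surface_def using x_0 \<open>c > 0\<close> by blast
  next
    assume "sin p = -1"
    then obtain n :: int where "p = (2 * of_int n + 3 / 2) * pi" using sin_eq_minus1 by blast
    then have "\<forall>s\<in>I. phi s = - pi / 2 + 2 * of_int (n + 1) * pi"
      using phi_p by (simp add: algebra_simps)
    moreover have "\<forall>s\<in>I. y s = c * exp (- 2 * s)" using c \<open>sin p = -1\<close> by simp
    ultimately show ?thesis unfolding is_item1_surface_def using x_0 \<open>c > 0\<close> by blast
  qed
qed

lemma constant_H_imp_zero_and_constant_angle:
  assumes const_H: "\<forall>s\<in>I. H_rot (phi s) (phi' s) = H"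
  shows "H = 0 \<and> (\<forall>s\<in>I. \<forall>t\<in>I. phi s = phi t)"
proof -
  note open_I = rot_generating_curveD(1)[OF curve]
    and phi_deriv = rot_generating_curveD(7)[OF curve]
  obtain s0 where s0: "s0 \<in> I" using rot_generating_curveD(3)[OF curve] by blast
  define u where "u s = x s / y s" for s
  have u_deriv: "(u has_real_derivative 4 * H) (at s)" if "s \<in> I" for s
    using rot_translator_slope_derivative[OF that] const_H that unfolding u_def[abs_def] by simp
  have cos_eq: "cos (phi s) = 2 * H + u s * sin (phi s)" if "s \<in> I" for s
    using rot_translator_H_eq[OF that] const_H that unfolding u_def by simp
  have phi'_eq: "phi' s = - u s * sin (phi s) - cos (phi s)" if "s \<in> I" for s
    using rot_translator_angle_derivative[OF that] unfolding u_def by simp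
  have quadratic: "(1 - H\<^sup>2) * (u s)\<^sup>2 + (4 * H\<^sup>2 - 1) * H\<^sup>2 = 0" if s: "s \<in> I" for s
  proof -
    have "\<forall>t\<in>I. cos (phi t) - u t * sin (phi t) = 2 * H" using cos_eq by simp
    moreover have "((\<lambda>t. cos (phi t) - u t * sin (phi t)) has_real_derivative
        - (sin (phi s) * phi' s + 4 * H * sin (phi s) + u s * cos (phi s) * phi' s)) (at s)"
      using phi_deriv[OF s] u_deriv[OF s] by (auto intro!: derivative_eq_intros simp: algebra_simps)
    ultimately have "- (sin (phi s) * phi' s + 4 * H * sin (phi s) + u s * cos (phi s) * phi' s) = 0"
      by (rule DERIV_eq_0_if_constant_on_open[OF open_I s])
    then show ?thesis
      using slope_quadratic_of_constant_H[OF sin_cos_squared_add2 cos_eq[OF s] phi'_eq[OF s]] by simp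
  qed
  have H_u: "(1 - H\<^sup>2) * H * u s = 0" if s: "s \<in> I" for s
  proof -
    have "\<forall>t\<in>I. (1 - H\<^sup>2) * (u t)\<^sup>2 + (4 * H\<^sup>2 - 1) * H\<^sup>2 = 0" using quadratic by blast
    moreover have "((\<lambda>t. (1 - H\<^sup>2) * (u t)\<^sup>2 + (4 * H\<^sup>2 - 1) * H\<^sup>2) has_real_derivative
        8 * ((1 - H\<^sup>2) * H * u s)) (at s)"
      using u_deriv[OF s] by (auto intro!: derivative_eq_intros)
    ultimately have "8 * ((1 - H\<^sup>2) * H * u s) = 0"
      by (rule DERIV_eq_0_if_constant_on_open[OF open_I s])
    then show ?thesis by simp
  qed
  have H_0: "H = 0"
  proof (rule ccontr)
    assume "H \<noteq> 0"
    have "1 - H\<^sup>2 \<noteq> 0"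
    proof
      assume "1 - H\<^sup>2 = 0"
      then show False using quadratic[OF s0] by simp
    qed
    then have "\<forall>s\<in>I. u s = 0" using H_u \<open>H \<noteq> 0\<close> by simp
    then have "4 * H = 0" using DERIV_eq_0_if_constant_on_open[OF open_I s0 _ u_deriv[OF s0]] by blast
    with \<open>H \<noteq> 0\<close> show False by simp
  qed
  have "(phi has_real_derivative 0) (at s within I)" if s: "s \<in> I" for s
  proof -
    have "u s = 0" using quadratic[OF s] H_0 by simp
    then have "phi' s = 0" using phi'_eq[OF s] cos_eq[OF s] H_0 by simp
    then show ?thesis using phi_deriv[OF s] by (simp add: has_field_derivative_at_within)
  qed
  then obtain c where "\<forall>s\<in>I. phi s = c"
    using has_field_derivative_zero_constant is_interval_convex rot_generating_curveD(2)[OF curve]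
    by metis
  then show ?thesis using H_0 by simp
qed

end

theorem mainTheorem4:
  fixes I :: "real set" and x y phi phi' :: "real \<Rightarrow> real"
  assumes curve: "rot_generating_curve I x y phi phi'"
    and translator: "V_translator_rot I x y phi phi'"
  shows "((\<forall>s\<in>I. \<forall>t\<in>I. phi s = phi t) \<longrightarrow> is_item1_surface I x y phi)
       \<and> (\<forall>H. (\<forall>s\<in>I. H_rot (phi s) (phi' s) = H) \<longrightarrow> H = 0 \<and> is_item1_surface I x y phi)"
  using item1_surface_if_constant_angle[OF curve translator]
    constant_H_imp_zero_and_constant_angle[OF curve translator]
  by blast

end
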